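(* Let $\mathcal C\subseteq(S^2)^n$ be a vector trifferent code with $|\mathcal C|\ge2$. Then \[ \binom{|\mathcal C|}{2}\cdot \mathbb E_{\{x,y\}}\bigl[2^{A(x,y)}\bigr]\le 3^n, \] where the expectation is over a uniformly random $2$-element subset $\{x,y\}$ of $\mathcal C$ and $A(x,y)=|\{i\in[n]:\langle x_i,y_i\rangle\neq0\}|$. Equivalently $\sum_{\{x,y\}\subseteq\mathcal C,\,x\ne y}2^{A(x,y)}\le 3^n$.
   Context: $S^2$ is the unit sphere in $\mathbb R^3$. A vector trifferent code of block length $n$ is a subset $\mathcal C\subseteq(S^2)^n$ such that for any three distinct $x,y,z\in\mathcal C$ there is $i\in[n]$ with $x_i,y_i,z_i$ mutually orthogonal. *)

theory Defs
  imports "HOL-Analysis.Analysis"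
begin

definition sphere_words :: "nat \<Rightarrow> (nat \<Rightarrow> real^3) set" where
  "sphere_words n = PiE {..<n} (\<lambda>_. sphere (0::real^3) 1)"

definition vector_trifferent :: "nat \<Rightarrow> (nat \<Rightarrow> real^3) set \<Rightarrow> bool" where
  "vector_trifferent n C \<longleftrightarrow> C \<subseteq> sphere_words n \<and>
     (\<forall>x\<in>C. \<forall>y\<in>C. \<forall>z\<in>C. x \<noteq> y \<and> y \<noteq> z \<and> x \<noteq> z \<longrightarrow>
        (\<exists>i<n. x i \<bullet> y i = 0 \<and> y i \<bullet> z i = 0 \<and> x i \<bullet> z i = 0))"

definition agree_count :: "nat \<Rightarrow> (nat \<Rightarrow> real^3) \<Rightarrow> (nat \<Rightarrow> real^3) \<Rightarrow> nat" where
  "agree_count n x y = card {i \<in> {..<n}. x i \<bullet> y i \<noteq> 0}"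

end

theory Submission
  imports Defs
begin

(*
  For each unordered pair {x, y} of codewords (oriented as (x, y)) and each coordinate i choose an
  orthonormal set F_i(x, y) inside the orthogonal complement of x_i which is also orthogonal to y_i
  when x_i \<bottom> y_i: the single vector x_i \<times> y_i in that case, an orthonormal basis of the plane
  x_i\<^sup>\<bottom> otherwise. So |F_i(x, y)| = 2 exactly at the coordinates counted by A(x, y), and the
  tensors s_1 \<otimes> ... \<otimes> s_n with s_i \<in> F_i(x, y) are 2^A(x, y) orthonormal vectors of
  (R^3)\<^sup>\<otimes>n, a space of dimension 3^n. Tensors of different pairs are orthogonal as well: trifference,
  applied to a suitable triple among x, y, x', y', gives a coordinate i and mutually orthogonal unit
  vectors a, b, c with s_i \<bottom> a, b and t_i \<bottom> c, which forces s_i \<bottom> t_i in R^3.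
  Hence the sum of 2^A(x, y) over unordered pairs is at most 3^n.
*)

lemma orthonormal_basis_inner_eq_0:
  fixes B :: "'a::euclidean_space set"
  assumes orth: "pairwise orthogonal B" and unit: "\<And>u. u \<in> B \<Longrightarrow> norm u = 1"
    and card: "card B = DIM('a)" and c: "c \<in> B"
    and v: "\<And>u. u \<in> B - {c} \<Longrightarrow> v \<bullet> u = 0" and w: "w \<bullet> c = 0"
  shows "v \<bullet> w = 0"
proof -
  have fin: "finite B"
    using card by (metis DIM_positive card.infinite less_irrefl)
  have "independent B"
    using orth unit by (metis norm_zero pairwise_orthogonal_independent zero_neq_one)
  then have "span B = UNIV"
    using card by (metis dim_eq_card dim_eq_full)
  then have "v = (\<Sum>u\<in>B. (v \<bullet> u) *\<^sub>R u)"
    using orthonormal_basis_expand[OF orth unit _ fin] by simp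
  also have "\<dots> = (v \<bullet> c) *\<^sub>R c"
    using v by (simp add: sum.remove[OF fin c])
  finally show ?thesis
    using w by (metis inner_commute inner_scaleR_left mult_zero_right)
qed

lemma orthonormal_triple_inner_eq_0:
  fixes a b c v w :: "real^3"
  assumes unit: "norm a = 1" "norm b = 1" "norm c = 1"
    and orth: "a \<bullet> b = 0" "b \<bullet> c = 0" "a \<bullet> c = 0"
    and "v \<bullet> a = 0" "v \<bullet> b = 0" "w \<bullet> c = 0"
  shows "v \<bullet> w = 0"
proof (rule orthonormal_basis_inner_eq_0)
  have "a \<noteq> b" "b \<noteq> c" "a \<noteq> c"
    using unit orth by (metis inner_eq_zero_iff norm_zero zero_neq_one)+
  then show "card {a, b, c} = DIM(real^3)"
    by simp
  show "pairwise orthogonal {a, b, c}"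
    using orth by (auto simp: pairwise_def orthogonal_def inner_commute)
qed (use assms in auto)

lemma hyperplane_orthonormal_basis:
  fixes u :: "'a::euclidean_space"
  assumes "u \<noteq> 0"
  obtains B where "B \<subseteq> {v. u \<bullet> v = 0}" "pairwise orthogonal B" "\<And>v. v \<in> B \<Longrightarrow> norm v = 1"
    "card B = DIM('a) - 1"
proof -
  obtain B where "B \<subseteq> {v. u \<bullet> v = 0}" "pairwise orthogonal B" "\<And>v. v \<in> B \<Longrightarrow> norm v = 1"
    "card B = dim {v. u \<bullet> v = 0}"
    using orthonormal_basis_subspace[OF subspace_hyperplane] by metis
  with that show thesis
    using dim_hyperplane[OF assms] by simp
qed

lemma norm_cross3_orthonormal:
  fixes a b :: "real^3"
  assumes "norm a = 1" "norm b = 1" "a \<bullet> b = 0"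
  shows "norm (cross3 a b) = 1"
  using norm_cross_dot[of a b] norm_ge_zero[of "cross3 a b"] assms by (auto simp: power2_eq_1_iff)

definition pair_frame :: "real^3 \<Rightarrow> real^3 \<Rightarrow> (real^3) set" where
  "pair_frame a b = (if a \<bullet> b = 0 then {cross3 a b}
     else (SOME B. B \<subseteq> {v. a \<bullet> v = 0} \<and> pairwise orthogonal B \<and> (\<forall>v\<in>B. norm v = 1) \<and> card B = 2))"

lemma
  fixes a b :: "real^3"
  assumes a: "norm a = 1" and b: "norm b = 1"
  shows card_pair_frame: "card (pair_frame a b) = (if a \<bullet> b = 0 then 1 else 2)"
    and pair_frame_pairwise_orthogonal: "pairwise orthogonal (pair_frame a b)"
    and norm_pair_frame: "v \<in> pair_frame a b \<Longrightarrow> norm v = 1"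
    and pair_frame_orthogonal_left: "v \<in> pair_frame a b \<Longrightarrow> v \<bullet> a = 0"
    and pair_frame_orthogonal_right: "v \<in> pair_frame a b \<Longrightarrow> a \<bullet> b = 0 \<Longrightarrow> v \<bullet> b = 0"
proof -
  define P where "P B \<longleftrightarrow> B \<subseteq> {v. a \<bullet> v = 0} \<and> pairwise orthogonal B \<and> (\<forall>v\<in>B. norm v = 1) \<and> card B = 2"
    for B :: "(real^3) set"
  have "a \<noteq> 0"
    using a by auto
  moreover have "DIM(real^3) - 1 = 2"
    by simp
  ultimately obtain B where "P B"
    using hyperplane_orthonormal_basis[of a] unfolding P_def by metis
  then have hyperplane: "P (SOME B. P B)"
    by (rule someI)
  have cross: "norm (cross3 a b) = 1" if "a \<bullet> b = 0"
    using norm_cross3_orthonormal[OF a b that] .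
  show "card (pair_frame a b) = (if a \<bullet> b = 0 then 1 else 2)"
    using hyperplane by (simp add: pair_frame_def P_def)
  show "pairwise orthogonal (pair_frame a b)"
    using hyperplane by (simp add: pair_frame_def P_def)
  show "norm v = 1" if "v \<in> pair_frame a b"
    using that hyperplane cross by (auto simp: pair_frame_def P_def split: if_splits)
  show "v \<bullet> a = 0" if "v \<in> pair_frame a b"
    using that hyperplane dot_cross_self by (auto simp: pair_frame_def P_def inner_commute split: if_splits)
  show "v \<bullet> b = 0" if "v \<in> pair_frame a b" "a \<bullet> b = 0"
    using that dot_cross_self by (simp add: pair_frame_def)
qed

definition frame_words :: "nat \<Rightarrow> (nat \<Rightarrow> real^3) \<Rightarrow> (nat \<Rightarrow> real^3) \<Rightarrow> (nat \<Rightarrow> real^3) set" where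
  "frame_words n x y = PiE {..<n} (\<lambda>i. pair_frame (x i) (y i))"

lemma frame_words_pair_frame: "s \<in> frame_words n x y \<Longrightarrow> i < n \<Longrightarrow> s i \<in> pair_frame (x i) (y i)"
  unfolding frame_words_def by (erule PiE_mem) simp

lemma norm_sphere_words: "x \<in> sphere_words n \<Longrightarrow> i < n \<Longrightarrow> norm (x i) = 1"
  by (auto simp: sphere_words_def PiE_iff)

lemma vector_trifferent_sphere_words: "vector_trifferent n C \<Longrightarrow> C \<subseteq> sphere_words n"
  by (simp add: vector_trifferent_def)

lemma vector_trifferent_norm: "vector_trifferent n C \<Longrightarrow> x \<in> C \<Longrightarrow> i < n \<Longrightarrow> norm (x i) = 1"
  using norm_sphere_words vector_trifferent_sphere_words by blast

lemma agree_count_commute: "agree_count n x y = agree_count n y x"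
  by (simp add: agree_count_def inner_commute)

lemma card_frame_words:
  assumes "x \<in> sphere_words n" "y \<in> sphere_words n"
  shows "card (frame_words n x y) = 2 ^ agree_count n x y"
proof -
  have "card (frame_words n x y) = (\<Prod>i<n. if x i \<bullet> y i = 0 then 1 else 2)"
    using assms by (simp add: frame_words_def card_PiE card_pair_frame norm_sphere_words)
  also have "\<dots> = (\<Prod>i\<in>{i \<in> {..<n}. x i \<bullet> y i \<noteq> 0}. 2)"
    by (subst prod.inter_filter) (auto intro: prod.cong)
  finally show ?thesis
    by (simp add: agree_count_def)
qed

lemma finite_frame_words:
  assumes "x \<in> sphere_words n" "y \<in> sphere_words n"
  shows "finite (frame_words n x y)"
  using card_frame_words[OF assms] by (metis card.infinite power_not_zero zero_neq_numeral)

(* The coordinates of s 0 \<otimes> ... \<otimes> s (n - 1), indexed by words w. *)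
definition tensor :: "nat \<Rightarrow> (nat \<Rightarrow> real^'k) \<Rightarrow> (nat \<Rightarrow> 'k) \<Rightarrow> real" where
  "tensor n s w = (\<Prod>i<n. s i $ w i)"

lemma sum_tensor_mult_tensor:
  fixes s t :: "nat \<Rightarrow> real^'k"
  shows "(\<Sum>w\<in>PiE {..<n} (\<lambda>_. UNIV). tensor n s w * tensor n t w) = (\<Prod>i<n. s i \<bullet> t i)"
proof -
  have "(\<Sum>w\<in>PiE {..<n} (\<lambda>_. UNIV). tensor n s w * tensor n t w)
      = (\<Sum>w\<in>PiE {..<n} (\<lambda>_. UNIV). \<Prod>i<n. s i $ w i * t i $ w i)"
    by (simp add: tensor_def prod.distrib)
  also have "\<dots> = (\<Prod>i<n. \<Sum>k\<in>UNIV. s i $ k * t i $ k)"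
    by (rule prod_sum_PiE[symmetric]) auto
  finally show ?thesis
    by (simp add: inner_vec_def)
qed

lemma orthonormal_family_card_le:
  fixes e :: "'j \<Rightarrow> 'w \<Rightarrow> real"
  assumes "finite J" "finite W"
    and orthonormal: "\<And>j k. j \<in> J \<Longrightarrow> k \<in> J \<Longrightarrow> (\<Sum>w\<in>W. e j w * e k w) = (if j = k then 1 else 0)"
  shows "card J \<le> card W"
proof -
  have bessel: "(\<Sum>j\<in>J. (e j w)\<^sup>2) \<le> 1" if "w \<in> W" for w
  proof -
    define S where "S = (\<Sum>j\<in>J. (e j w)\<^sup>2)"
    define f where "f v = (\<Sum>j\<in>J. e j w * e j v)" for v
    have "(\<Sum>v\<in>W. f v * f v) = (\<Sum>v\<in>W. \<Sum>j\<in>J. \<Sum>k\<in>J. e j w * e k w * (e j v * e k v))"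
      unfolding f_def by (simp add: sum_product algebra_simps)
    also have "\<dots> = (\<Sum>j\<in>J. \<Sum>k\<in>J. e j w * e k w * (\<Sum>v\<in>W. e j v * e k v))"
      by (simp add: sum.swap[of _ W] sum_distrib_left)
    also have "\<dots> = S"
      using \<open>finite J\<close> by (simp add: orthonormal S_def power2_eq_square if_distrib cong: if_cong)
    finally have "(\<Sum>v\<in>W. f v * f v) = S" .
    moreover have "f w * f w \<le> (\<Sum>v\<in>W. f v * f v)"
      using member_le_sum[of w W "\<lambda>v. f v * f v"] \<open>w \<in> W\<close> \<open>finite W\<close> by simp
    moreover have "f w = S"
      by (simp add: f_def S_def power2_eq_square)
    moreover have "S \<ge> 0"
      by (simp add: S_def sum_nonneg)
    ultimately have "S * S \<le> S * 1"
      by simp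
    with \<open>S \<ge> 0\<close> show ?thesis
      unfolding S_def[symmetric] by (cases "S = 0") (auto simp: mult_le_cancel_left_pos)
  qed
  have "real (card J) = (\<Sum>j\<in>J. \<Sum>w\<in>W. (e j w)\<^sup>2)"
    by (simp add: orthonormal power2_eq_square)
  also have "\<dots> = (\<Sum>w\<in>W. \<Sum>j\<in>J. (e j w)\<^sup>2)"
    by (rule sum.swap)
  also have "\<dots> \<le> (\<Sum>w\<in>W. 1)"
    using bessel by (intro sum_mono)
  also have "\<dots> = real (card W)"
    by simp
  finally show ?thesis
    by simp
qed

lemma sum_offdiag_symmetric:
  fixes h :: "'a \<Rightarrow> 'a \<Rightarrow> 'b::semiring_1"
  assumes "finite C" and symmetric: "\<And>x y. h x y = h y x"
  obtains Q where "Q \<subseteq> {(x, y). x \<in> C \<and> y \<in> C \<and> x \<noteq> y}" "\<And>x y. (x, y) \<in> Q \<Longrightarrow> (y, x) \<notin> Q"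
    "(\<Sum>(x, y)\<in>{(x, y). x \<in> C \<and> y \<in> C \<and> x \<noteq> y}. h x y) = 2 * (\<Sum>(x, y)\<in>Q. h x y)"
proof -
  obtain g :: "'a \<Rightarrow> nat" where "inj_on g C"
    using finite_imp_inj_to_nat_seg[OF \<open>finite C\<close>] by metis
  define P where "P = {(x, y). x \<in> C \<and> y \<in> C \<and> x \<noteq> y}"
  define Q where "Q = {(x, y). x \<in> C \<and> y \<in> C \<and> g x < g y}"
  have P_split: "P = Q \<union> prod.swap ` Q"
  proof (intro equalityI subsetI)
    fix p
    assume "p \<in> P"
    then obtain x y where "p = (x, y)" "x \<in> C" "y \<in> C" "g x \<noteq> g y"
      using \<open>inj_on g C\<close> unfolding P_def by (auto dest: inj_onD)
    then show "p \<in> Q \<union> prod.swap ` Q"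
      unfolding Q_def by (cases "g x < g y") auto
  qed (auto simp: P_def Q_def)
  have "finite P"
    unfolding P_def by (rule finite_subset[of _ "C \<times> C"]) (use \<open>finite C\<close> in auto)
  then have "finite Q"
    using P_split by simp
  have "(\<Sum>(x, y)\<in>P. h x y) = (\<Sum>(x, y)\<in>Q. h x y) + (\<Sum>(x, y)\<in>prod.swap ` Q. h x y)"
    unfolding P_split using \<open>finite Q\<close> by (intro sum.union_disjoint) (auto simp: Q_def)
  also have "(\<Sum>(x, y)\<in>prod.swap ` Q. h x y) = (\<Sum>(x, y)\<in>Q. h x y)"
    by (subst sum.reindex) (auto simp: symmetric case_prod_beta)
  finally have "(\<Sum>(x, y)\<in>P. h x y) = 2 * (\<Sum>(x, y)\<in>Q. h x y)"
    by (simp add: mult_2)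
  moreover have "Q \<subseteq> P"
    using P_split by blast
  moreover have "(y, x) \<notin> Q" if "(x, y) \<in> Q" for x y
    using that by (simp add: Q_def)
  ultimately show thesis
    using that unfolding P_def by blast
qed

lemma frame_words_separate_pairs:
  assumes "vector_trifferent n C"
    and x: "x \<in> C" and y: "y \<in> C" and x': "x' \<in> C" and y': "y' \<in> C" and "x \<noteq> y" "x' \<noteq> y'"
    and "(x', y') \<noteq> (x, y)" "(x', y') \<noteq> (y, x)"
    and s: "s \<in> frame_words n x y" and t: "t \<in> frame_words n x' y'"
  shows "\<exists>i<n. s i \<bullet> t i = 0"
proof -
  note unit = vector_trifferent_norm[OF assms(1)]
  have triple: "\<exists>i<n. a i \<bullet> b i = 0 \<and> b i \<bullet> c i = 0 \<and> a i \<bullet> c i = 0"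
    if "a \<in> C" "b \<in> C" "c \<in> C" "a \<noteq> b" "b \<noteq> c" "a \<noteq> c" for a b c
    using assms(1) that unfolding vector_trifferent_def by blast
  have s_perp: "s i \<bullet> x i = 0" "x i \<bullet> y i = 0 \<Longrightarrow> s i \<bullet> y i = 0" if "i < n" for i
    using frame_words_pair_frame[OF s that] unit[OF x that] unit[OF y that]
    by (auto intro: pair_frame_orthogonal_left pair_frame_orthogonal_right)
  have t_perp: "t i \<bullet> x' i = 0" "x' i \<bullet> y' i = 0 \<Longrightarrow> t i \<bullet> y' i = 0" if "i < n" for i
    using frame_words_pair_frame[OF t that] unit[OF x' that] unit[OF y' that]
    by (auto intro: pair_frame_orthogonal_left pair_frame_orthogonal_right)
  consider "x' \<notin> {x, y}" | "x \<notin> {x', y'}" | "x' = x" "y' \<noteq> y"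
    using assms(8,9) by auto
  then show ?thesis
  proof cases
    case 1
    then obtain i where i: "i < n" and orth: "x i \<bullet> y i = 0" "y i \<bullet> x' i = 0" "x i \<bullet> x' i = 0"
      using triple[OF x y x'] \<open>x \<noteq> y\<close> by auto
    have "s i \<bullet> t i = 0"
      by (rule orthonormal_triple_inner_eq_0[OF unit[OF x i] unit[OF y i] unit[OF x' i] orth
            s_perp(1)[OF i] s_perp(2)[OF i orth(1)] t_perp(1)[OF i]])
    with i show ?thesis
      by blast
  next
    case 2
    then obtain i where i: "i < n" and orth: "x' i \<bullet> y' i = 0" "y' i \<bullet> x i = 0" "x' i \<bullet> x i = 0"
      using triple[OF x' y' x] \<open>x' \<noteq> y'\<close> by auto
    have "t i \<bullet> s i = 0"
      by (rule orthonormal_triple_inner_eq_0[OF unit[OF x' i] unit[OF y' i] unit[OF x i] orth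
            t_perp(1)[OF i] t_perp(2)[OF i orth(1)] s_perp(1)[OF i]])
    with i show ?thesis
      by (auto simp: inner_commute)
  next
    case 3
    then obtain i where i: "i < n" and orth: "x i \<bullet> y i = 0" "y i \<bullet> y' i = 0" "x i \<bullet> y' i = 0"
      using triple[OF x y y'] \<open>x \<noteq> y\<close> \<open>x' \<noteq> y'\<close> by auto
    have "s i \<bullet> t i = 0"
      by (rule orthonormal_triple_inner_eq_0[OF unit[OF x i] unit[OF y i] unit[OF y' i] orth
            s_perp(1)[OF i] s_perp(2)[OF i orth(1)] t_perp(2)[OF i]])
        (use 3 orth(3) in simp)
    with i show ?thesis
      by blast
  qed
qed

lemma frame_tensors_orthonormal:
  assumes "vector_trifferent n C"
    and Q: "Q \<subseteq> {(x, y). x \<in> C \<and> y \<in> C \<and> x \<noteq> y}"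
    and antisym: "\<And>x y. (x, y) \<in> Q \<Longrightarrow> (y, x) \<notin> Q"
    and j: "j \<in> Sigma Q (\<lambda>(x, y). frame_words n x y)"
    and k: "k \<in> Sigma Q (\<lambda>(x, y). frame_words n x y)"
  shows "(\<Sum>w\<in>PiE {..<n} (\<lambda>_. UNIV). tensor n (snd j) w * tensor n (snd k) w)
    = (if j = k then 1 else 0)"
proof -
  obtain x y s x' y' t where jk: "j = ((x, y), s)" "k = ((x', y'), t)"
    by (metis prod.collapse)
  have x: "x \<in> C" and y: "y \<in> C" and x': "x' \<in> C" and y': "y' \<in> C"
    and "x \<noteq> y" "x' \<noteq> y'" and s: "s \<in> frame_words n x y" and t: "t \<in> frame_words n x' y'"
    using Q j k jk by auto
  note unit = vector_trifferent_norm[OF assms(1)]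
  have "(\<Sum>w\<in>PiE {..<n} (\<lambda>_. UNIV). tensor n (snd j) w * tensor n (snd k) w) = (\<Prod>i<n. s i \<bullet> t i)"
    using jk by (simp add: sum_tensor_mult_tensor)
  also have "\<dots> = (if j = k then 1 else 0)"
  proof (cases "j = k")
    case True
    have "s i \<bullet> s i = 1" if "i < n" for i
      using norm_pair_frame[OF unit[OF x that] unit[OF y that] frame_words_pair_frame[OF s that]]
      by (simp add: dot_square_norm)
    with True jk show ?thesis
      by simp
  next
    case False
    have "\<exists>i<n. s i \<bullet> t i = 0"
    proof (cases "(x', y') = (x, y)")
      case True
      with False jk have "s \<noteq> t"
        by auto
      then obtain i where "i < n" "s i \<noteq> t i"
        using PiE_ext[of s "{..<n}" "\<lambda>i. pair_frame (x i) (y i)" t] s t True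
        by (auto simp: frame_words_def)
      moreover have "s i \<in> pair_frame (x i) (y i)" "t i \<in> pair_frame (x i) (y i)"
        using frame_words_pair_frame s t True \<open>i < n\<close> by auto
      ultimately show ?thesis
        using pair_frame_pairwise_orthogonal[OF unit[OF x] unit[OF y]]
        by (auto simp: pairwise_def orthogonal_def)
    next
      case False
      moreover have "(x', y') \<noteq> (y, x)"
        using antisym j k jk by auto
      ultimately show ?thesis
        using frame_words_separate_pairs[OF assms(1) x y x' y' \<open>x \<noteq> y\<close> \<open>x' \<noteq> y'\<close> _ _ s t] by blast
    qed
    with False show ?thesis
      by auto
  qed
  finally show ?thesis .
qed

theorem mainTheorem7:
  fixes n :: nat and C :: "(nat \<Rightarrow> real^3) set"
  assumes "vector_trifferent n C" and "finite C" and "card C \<ge> 2"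
  shows "(\<Sum>(x, y)\<in>{(x, y). x \<in> C \<and> y \<in> C \<and> x \<noteq> y}. (2::real) ^ agree_count n x y) / 2
         \<le> 3 ^ n"
proof -
  have symmetric: "(2::real) ^ agree_count n x y = 2 ^ agree_count n y x" for x y
    by (simp add: agree_count_commute)
  obtain Q where Q: "Q \<subseteq> {(x, y). x \<in> C \<and> y \<in> C \<and> x \<noteq> y}"
    and antisym: "\<And>x y. (x, y) \<in> Q \<Longrightarrow> (y, x) \<notin> Q"
    and halve: "(\<Sum>(x, y)\<in>{(x, y). x \<in> C \<and> y \<in> C \<and> x \<noteq> y}. (2::real) ^ agree_count n x y)
      = 2 * (\<Sum>(x, y)\<in>Q. 2 ^ agree_count n x y)"
    using sum_offdiag_symmetric[where h = "\<lambda>x y. (2::real) ^ agree_count n x y", OF \<open>finite C\<close> symmetric]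
    by blast
  define J where "J = Sigma Q (\<lambda>(x, y). frame_words n x y)"
  have words: "x \<in> sphere_words n" "y \<in> sphere_words n" if "(x, y) \<in> Q" for x y
    using Q that vector_trifferent_sphere_words[OF assms(1)] by auto
  have "finite Q"
    using Q \<open>finite C\<close> by (auto intro: finite_subset[of Q "C \<times> C"])
  have "card J \<le> card (PiE {..<n} (\<lambda>_. UNIV :: 3 set))"
  proof (rule orthonormal_family_card_le[where e = "\<lambda>j. tensor n (snd j)"])
    show "finite J"
      unfolding J_def using \<open>finite Q\<close> words by (intro finite_SigmaI) (auto intro: finite_frame_words)
  qed (simp_all add: finite_PiE J_def frame_tensors_orthonormal[OF assms(1) Q antisym])
  have "(\<Sum>(x, y)\<in>Q. 2 ^ agree_count n x y) = real (card J)"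
    unfolding J_def using \<open>finite Q\<close> words
    by (subst card_SigmaI) (auto simp: card_frame_words finite_frame_words intro!: sum.cong)
  also have "\<dots> \<le> 3 ^ n"
    using \<open>card J \<le> _\<close> by (simp add: card_PiE)
  finally show ?thesis
    using halve by simp
qed

end
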